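(* In $\varepsilon\tau(\mathbf{C})$ (classical logic), for every derivation $\pi$ and every critical $\varepsilon\tau$-term $e$ of $\pi$ there is a complete $e$-elimination set.
   Context: $\mathbf{C}$ is classical propositional logic. $\varepsilon\tau$-terms: $\varepsilon x\,A(x)$, $\tau x\,A(x)$. Critical formulas: $A(t)\to A(\varepsilon x\,A(x))$ (belonging to its critical term $\varepsilon x\,A(x)$) and $A(\tau x\,A(x))\to A(t)$ (belonging to $\tau x\,A(x)$). A derivation $\pi$ of $D$ in $\varepsilon\tau(\mathbf{L})$ is a derivation in the quantifier-free language with $\varepsilon\tau$-terms from a finite set of critical formulas using substitution instances of theorems of $\mathbf{L}$ and modus ponens; $e$ is a critical $\varepsilon\tau$-term of $\pi$ if some critical formula used in $\pi$ belongs to $e$. Write the critical formulas of $\pi$ as $\Gamma\cup\Lambda(e)$, $\Lambda(e)$ all those belonging to $e$, and the end formula as $D(e)$; $\Gamma[s/e]$, $D(s)$ denote replacement of every occurrence of $e$ by $s$. $\{s_1,\dots,s_k\}$ is a complete $e$-elimination set for $\pi$ if $\Gamma[s_1/e],\dots,\Gamma[s_k/e]\vdash_{\mathbf{L}}D(s_1)\lor\dots\lor D(s_k)$ (derivability from these assumptions by substitution instances of theorems of $\mathbf{L}$ and modus ponens; the assumptions need not be critical formulas). *)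

theory Defs
  imports Main
begin

text \<open>Free variables FV n; bound variables BV i are de Bruijn indices, bound by
Eps / Tau.  Eps A stands for eps x A(x), where x is the bound index 0 in A.
Alpha-equivalent terms are thus syntactically identical.\<close>

datatype trm = FV nat | BV nat | Fn nat "trm list" | Eps frm | Tau frm
and frm = Bot | Atm nat "trm list" | Conj frm frm | Disj frm frm | Imp frm frm

primrec lc_t :: "nat \<Rightarrow> trm \<Rightarrow> bool" and lc_f :: "nat \<Rightarrow> frm \<Rightarrow> bool" where
  "lc_t k (FV n) = True"
| "lc_t k (BV i) = (i < k)"
| "lc_t k (Fn f ts) = list_all (lc_t k) ts"
| "lc_t k (Eps A) = lc_f (Suc k) A"
| "lc_t k (Tau A) = lc_f (Suc k) A"
| "lc_f k Bot = True"
| "lc_f k (Atm p ts) = list_all (lc_t k) ts"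
| "lc_f k (Conj A B) = (lc_f k A \<and> lc_f k B)"
| "lc_f k (Disj A B) = (lc_f k A \<and> lc_f k B)"
| "lc_f k (Imp A B) = (lc_f k A \<and> lc_f k B)"

text \<open>Opening: instantiate bound index k by the (locally closed) term s; A(t) = open_f 0 t A.\<close>
primrec open_t :: "nat \<Rightarrow> trm \<Rightarrow> trm \<Rightarrow> trm" and open_f :: "nat \<Rightarrow> trm \<Rightarrow> frm \<Rightarrow> frm" where
  "open_t k s (FV n) = FV n"
| "open_t k s (BV i) = (if i = k then s else BV i)"
| "open_t k s (Fn f ts) = Fn f (map (open_t k s) ts)"
| "open_t k s (Eps A) = Eps (open_f (Suc k) s A)"
| "open_t k s (Tau A) = Tau (open_f (Suc k) s A)"
| "open_f k s Bot = Bot"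
| "open_f k s (Atm p ts) = Atm p (map (open_t k s) ts)"
| "open_f k s (Conj A B) = Conj (open_f k s A) (open_f k s B)"
| "open_f k s (Disj A B) = Disj (open_f k s A) (open_f k s B)"
| "open_f k s (Imp A B) = Imp (open_f k s A) (open_f k s B)"

primrec repl_t :: "trm \<Rightarrow> trm \<Rightarrow> trm \<Rightarrow> trm" and repl_f :: "trm \<Rightarrow> trm \<Rightarrow> frm \<Rightarrow> frm" where
  "repl_t e s (FV n) = (if FV n = e then s else FV n)"
| "repl_t e s (BV i) = (if BV i = e then s else BV i)"
| "repl_t e s (Fn f ts) = (if Fn f ts = e then s else Fn f (map (repl_t e s) ts))"
| "repl_t e s (Eps A) = (if Eps A = e then s else Eps (repl_f e s A))"
| "repl_t e s (Tau A) = (if Tau A = e then s else Tau (repl_f e s A))"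
| "repl_f e s Bot = Bot"
| "repl_f e s (Atm p ts) = Atm p (map (repl_t e s) ts)"
| "repl_f e s (Conj A B) = Conj (repl_f e s A) (repl_f e s B)"
| "repl_f e s (Disj A B) = Disj (repl_f e s A) (repl_f e s B)"
| "repl_f e s (Imp A B) = Imp (repl_f e s A) (repl_f e s B)"

datatype pform = PV nat | PBot | PConj pform pform | PDisj pform pform | PImp pform pform

primrec peval :: "(nat \<Rightarrow> bool) \<Rightarrow> pform \<Rightarrow> bool" where
  "peval v (PV n) = v n"
| "peval v PBot = False"
| "peval v (PConj a b) = (peval v a \<and> peval v b)"
| "peval v (PDisj a b) = (peval v a \<or> peval v b)"
| "peval v (PImp a b) = (peval v a \<longrightarrow> peval v b)"

definition C_thm :: "pform \<Rightarrow> bool" where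
  "C_thm a \<longleftrightarrow> (\<forall>v. peval v a)"

primrec pinst :: "(nat \<Rightarrow> frm) \<Rightarrow> pform \<Rightarrow> frm" where
  "pinst \<sigma> (PV n) = \<sigma> n"
| "pinst \<sigma> PBot = Bot"
| "pinst \<sigma> (PConj a b) = Conj (pinst \<sigma> a) (pinst \<sigma> b)"
| "pinst \<sigma> (PDisj a b) = Disj (pinst \<sigma> a) (pinst \<sigma> b)"
| "pinst \<sigma> (PImp a b) = Imp (pinst \<sigma> a) (pinst \<sigma> b)"

definition C_axiom :: "frm \<Rightarrow> bool" where
  "C_axiom F \<longleftrightarrow> lc_f 0 F \<and> (\<exists>a \<sigma>. C_thm a \<and> F = pinst \<sigma> a)"

inductive derives :: "frm set \<Rightarrow> frm \<Rightarrow> bool" where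
  assm: "F \<in> \<Gamma> \<Longrightarrow> derives \<Gamma> F"
| ax: "C_axiom F \<Longrightarrow> derives \<Gamma> F"
| mp: "derives \<Gamma> F \<Longrightarrow> derives \<Gamma> (Imp F G) \<Longrightarrow> derives \<Gamma> G"

definition belongs :: "frm \<Rightarrow> trm \<Rightarrow> bool" where
  "belongs F e \<longleftrightarrow>
     (\<exists>A t. e = Eps A \<and> lc_f 1 A \<and> lc_t 0 t \<and> F = Imp (open_f 0 t A) (open_f 0 e A)) \<or>
     (\<exists>A t. e = Tau A \<and> lc_f 1 A \<and> lc_t 0 t \<and> F = Imp (open_f 0 e A) (open_f 0 t A))"

definition critical :: "frm \<Rightarrow> bool" where
  "critical F \<longleftrightarrow> (\<exists>e. belongs F e)"

datatype rule = Crit | Axm | MP nat nat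

definition is_deriv :: "(frm \<times> rule) list \<Rightarrow> bool" where
  "is_deriv \<pi> \<longleftrightarrow> \<pi> \<noteq> [] \<and>
    (\<forall>i < length \<pi>. lc_f 0 (fst (\<pi>!i)) \<and>
      (case snd (\<pi>!i) of
         Crit \<Rightarrow> critical (fst (\<pi>!i))
       | Axm \<Rightarrow> C_axiom (fst (\<pi>!i))
       | MP j k \<Rightarrow> j < i \<and> k < i \<and> fst (\<pi>!k) = Imp (fst (\<pi>!j)) (fst (\<pi>!i))))"

definition crit_fmls :: "(frm \<times> rule) list \<Rightarrow> frm set" where
  "crit_fmls \<pi> = {fst (\<pi>!i) | i. i < length \<pi> \<and> snd (\<pi>!i) = Crit}"

definition end_fml :: "(frm \<times> rule) list \<Rightarrow> frm" where
  "end_fml \<pi> = fst (last \<pi>)"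

definition crit_term :: "(frm \<times> rule) list \<Rightarrow> trm \<Rightarrow> bool" where
  "crit_term \<pi> e \<longleftrightarrow> (\<exists>F \<in> crit_fmls \<pi>. belongs F e)"

definition Lam :: "(frm \<times> rule) list \<Rightarrow> trm \<Rightarrow> frm set" where
  "Lam \<pi> e = {F \<in> crit_fmls \<pi>. belongs F e}"

definition Gam :: "(frm \<times> rule) list \<Rightarrow> trm \<Rightarrow> frm set" where
  "Gam \<pi> e = crit_fmls \<pi> - Lam \<pi> e"

fun disj_list :: "frm list \<Rightarrow> frm" where
  "disj_list [] = Bot"
| "disj_list [F] = F"
| "disj_list (F # Fs) = Disj F (disj_list Fs)"

definition complete_elim_set :: "(frm \<times> rule) list \<Rightarrow> trm \<Rightarrow> trm list \<Rightarrow> bool" where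
  "complete_elim_set \<pi> e ss \<longleftrightarrow> ss \<noteq> [] \<and> (\<forall>s \<in> set ss. lc_t 0 s) \<and>
     derives (\<Union>s \<in> set ss. repl_f e s ` Gam \<pi> e)
             (disj_list (map (\<lambda>s. repl_f e s (end_fml \<pi>)) ss))"

end

(* Read formulas truth-functionally, every atomic formula (epsilon and tau terms included)
   being an independent propositional variable: soundness of derivations and completeness of C
   then make the claim semantic. Take as elimination set e together with a witness t for each
   critical formula of e; say e = eps x A(x). If some interpretation made every Gamma[s/e] true
   and every D(s) false, then for each s some member of Lambda(e)[s/e] would be false. At s = e
   this is some A(t) --> A(e), so A(t) holds; at s = t it is some A(t')[t/e] --> A(e)[t/e], and
   A(e)[t/e] = A(t) because e, being larger than A, cannot occur in A; so A(t) fails.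
   The tau case is dual. *)
theory Submission
  imports Defs "HOL-Library.Countable"
begin

primrec size_t :: "trm \<Rightarrow> nat" and size_f :: "frm \<Rightarrow> nat" where
  "size_t (FV n) = 1"
| "size_t (BV i) = 1"
| "size_t (Fn f ts) = Suc (sum_list (map size_t ts))"
| "size_t (trm.Eps A) = Suc (size_f A)"
| "size_t (Tau A) = Suc (size_f A)"
| "size_f Bot = 1"
| "size_f (Atm p ts) = Suc (sum_list (map size_t ts))"
| "size_f (Conj A B) = Suc (size_f A + size_f B)"
| "size_f (Disj A B) = Suc (size_f A + size_f B)"
| "size_f (Imp A B) = Suc (size_f A + size_f B)"

primrec occs_t :: "nat \<Rightarrow> trm \<Rightarrow> nat" and occs_f :: "nat \<Rightarrow> frm \<Rightarrow> nat" where
  "occs_t k (FV n) = 0"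
| "occs_t k (BV i) = (if i = k then 1 else 0)"
| "occs_t k (Fn f ts) = sum_list (map (occs_t k) ts)"
| "occs_t k (trm.Eps A) = occs_f (Suc k) A"
| "occs_t k (Tau A) = occs_f (Suc k) A"
| "occs_f k Bot = 0"
| "occs_f k (Atm p ts) = sum_list (map (occs_t k) ts)"
| "occs_f k (Conj A B) = occs_f k A + occs_f k B"
| "occs_f k (Disj A B) = occs_f k A + occs_f k B"
| "occs_f k (Imp A B) = occs_f k A + occs_f k B"

lemma size_pos: "size_t u \<ge> 1" "size_f F \<ge> 1"
  by (cases u; simp) (cases F; simp)

lemma size_open:
  "size_t (open_t k s u) + occs_t k u = size_t u + occs_t k u * size_t s"
  "size_f (open_f k s F) + occs_f k F = size_f F + occs_f k F * size_t s"
proof (induct u and F arbitrary: k and k)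
  case (Fn f ts)
  then have "(\<Sum>x\<leftarrow>ts. size_t (open_t k s x) + occs_t k x) = (\<Sum>x\<leftarrow>ts. size_t x + occs_t k x * size_t s)"
    by (intro arg_cong[where f = sum_list] map_cong) auto
  then show ?case by (simp add: sum_list_addf sum_list_mult_const o_def)
next
  case (Atm p ts)
  then have "(\<Sum>x\<leftarrow>ts. size_t (open_t k s x) + occs_t k x) = (\<Sum>x\<leftarrow>ts. size_t x + occs_t k x * size_t s)"
    by (intro arg_cong[where f = sum_list] map_cong) auto
  then show ?case by (simp add: sum_list_addf sum_list_mult_const o_def)
qed (auto simp: algebra_simps)

lemma open_no_occs:
  "occs_t k u = 0 \<Longrightarrow> open_t k s u = u"
  "occs_f k F = 0 \<Longrightarrow> open_f k s F = F"
  by (induct u and F arbitrary: k and k) (auto intro: map_idI)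

text \<open>Either k does not occur in u and opening changes nothing, or e is inserted into a compound
  term, which then becomes larger than e.\<close>
lemma open_neq:
  assumes "size_t u < size_t e" "\<forall>i. u \<noteq> BV i"
  shows "open_t k e u \<noteq> e"
proof (cases "occs_t k u")
  case 0
  then show ?thesis using open_no_occs(1) assms(1) by auto
next
  case (Suc c)
  have "size_t u \<ge> 2"
  proof (cases u)
    case (Fn f ts)
    with Suc obtain x xs where "ts = x # xs" by (cases ts) auto
    with Fn show ?thesis using size_pos(1)[of x] by simp
  qed (use Suc assms(2) size_pos in \<open>auto simp: Suc_le_eq\<close>)
  moreover have "size_t (open_t k e u) + Suc c = size_t u + size_t e + c * size_t e"
    using size_open(1)[of k e u] Suc by simp
  moreover have "c \<le> c * size_t e" using size_pos(1)[of e] by simp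
  ultimately have "size_t (open_t k e u) > size_t e" by linarith
  then show ?thesis by auto
qed

lemma repl_open_smaller:
  "size_t u < size_t e \<Longrightarrow> repl_t e s (open_t k e u) = open_t k s u"
  "size_f F < size_t e \<Longrightarrow> repl_f e s (open_f k e F) = open_f k s F"
proof (induct u and F arbitrary: k and k)
  case (BV i)
  then show ?case by (cases e) auto
next
  case (Fn f ts)
  then have "\<forall>x\<in>set ts. size_t x < size_t e"
    using member_le_sum_list[of _ "map size_t ts"] by fastforce
  moreover have "open_t k e (Fn f ts) \<noteq> e" by (rule open_neq) (use Fn in auto)
  ultimately show ?case using Fn by auto
next
  case (Eps B)
  then have "open_t k e (trm.Eps B) \<noteq> e" by (intro open_neq) auto
  with Eps show ?case by auto
next
  case (Tau B)
  then have "open_t k e (Tau B) \<noteq> e" by (intro open_neq) auto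
  with Tau show ?case by auto
next
  case (Atm p ts)
  then have "\<forall>x\<in>set ts. size_t x < size_t e"
    using member_le_sum_list[of _ "map size_t ts"] by fastforce
  with Atm show ?case by auto
qed auto

lemma repl_open_binder:
  assumes "e = trm.Eps A \<or> e = Tau A"
  shows "repl_f e s (open_f 0 e A) = open_f 0 s A"
  using repl_open_smaller(2) assms by auto

primrec holds :: "(frm \<Rightarrow> bool) \<Rightarrow> frm \<Rightarrow> bool" where
  "holds I Bot = False"
| "holds I (Atm p ts) = I (Atm p ts)"
| "holds I (Conj A B) = (holds I A \<and> holds I B)"
| "holds I (Disj A B) = (holds I A \<or> holds I B)"
| "holds I (Imp A B) = (holds I A \<longrightarrow> holds I B)"

definition entails :: "frm set \<Rightarrow> frm \<Rightarrow> bool" where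
  "entails \<Gamma> F \<longleftrightarrow> (\<forall>I. (\<forall>G\<in>\<Gamma>. holds I G) \<longrightarrow> holds I F)"

lemma holds_pinst: "holds I (pinst \<sigma> a) = peval (\<lambda>n. holds I (\<sigma> n)) a"
  by (induct a) auto

lemma holds_C_axiom: "C_axiom F \<Longrightarrow> holds I F"
  unfolding C_axiom_def C_thm_def by (auto simp: holds_pinst)

instance trm :: countable by countable_datatype
instance frm :: countable by countable_datatype

primrec skeleton :: "frm \<Rightarrow> pform" where
  "skeleton Bot = PBot"
| "skeleton (Atm p ts) = PV (to_nat (Atm p ts))"
| "skeleton (Conj A B) = PConj (skeleton A) (skeleton B)"
| "skeleton (Disj A B) = PDisj (skeleton A) (skeleton B)"
| "skeleton (Imp A B) = PImp (skeleton A) (skeleton B)"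

lemma pinst_skeleton: "pinst from_nat (skeleton F) = F"
  by (induct F) auto

lemma peval_skeleton: "peval v (skeleton F) = holds (\<lambda>a. v (to_nat a)) F"
  by (induct F) auto

lemma C_axiom_if_valid:
  assumes "lc_f 0 F" "\<forall>I. holds I F"
  shows "C_axiom F"
  unfolding C_axiom_def C_thm_def using assms by (metis pinst_skeleton peval_skeleton)

lemma derives_mono: "derives \<Gamma> F \<Longrightarrow> \<Gamma> \<subseteq> \<Delta> \<Longrightarrow> derives \<Delta> F"
  by (induct rule: derives.induct) (auto intro: derives.intros)

lemma derives_if_entails:
  assumes "finite \<Gamma>" "\<forall>G\<in>\<Gamma>. lc_f 0 G" "lc_f 0 F" "entails \<Gamma> F"
  shows "derives \<Gamma> F"
  using assms
proof (induct \<Gamma> arbitrary: F rule: finite_induct)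
  case empty
  then show ?case by (auto simp: entails_def intro: derives.ax C_axiom_if_valid)
next
  case (insert G \<Gamma>)
  then have "derives \<Gamma> (Imp G F)" by (auto simp: entails_def)
  then have "derives (insert G \<Gamma>) (Imp G F)" by (rule derives_mono) auto
  then show ?case by (meson derives.assm derives.mp insertI1)
qed

lemma holds_disj_list: "holds I (disj_list Fs) = (\<exists>F\<in>set Fs. holds I F)"
  by (induct Fs rule: disj_list.induct) auto

lemma holds_repl_f: "holds (\<lambda>a. I (repl_f e s a)) F = holds I (repl_f e s F)"
  by (induct F) auto

lemma repl_id: "repl_t e e u = u" "repl_f e e F = F"
  by (induct u and F) (auto intro: map_idI)

lemma lc_mono: "lc_t k u \<Longrightarrow> k \<le> m \<Longrightarrow> lc_t m u" "lc_f k F \<Longrightarrow> k \<le> m \<Longrightarrow> lc_f m F"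
  by (induct u and F arbitrary: k m and k m) (auto simp: list_all_iff)

lemma lc_repl:
  "lc_t k u \<Longrightarrow> lc_t 0 s \<Longrightarrow> lc_t k (repl_t e s u)"
  "lc_f k F \<Longrightarrow> lc_t 0 s \<Longrightarrow> lc_f k (repl_f e s F)"
  by (induct u and F arbitrary: k and k) (auto simp: list_all_iff dest: lc_mono(1))

lemma lc_disj_list: "\<forall>F\<in>set Fs. lc_f 0 F \<Longrightarrow> lc_f 0 (disj_list Fs)"
  by (induct Fs rule: disj_list.induct) auto

lemma holds_deriv_line:
  assumes "is_deriv \<pi>" "\<forall>F\<in>crit_fmls \<pi>. holds I F" "i < length \<pi>"
  shows "holds I (fst (\<pi> ! i))"
  using assms(3)
proof (induct i rule: less_induct)
  case (less i)
  have line: "case snd (\<pi> ! i) of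
      Crit \<Rightarrow> critical (fst (\<pi> ! i))
    | Axm \<Rightarrow> C_axiom (fst (\<pi> ! i))
    | MP j k \<Rightarrow> j < i \<and> k < i \<and> fst (\<pi> ! k) = Imp (fst (\<pi> ! j)) (fst (\<pi> ! i))"
    using assms(1) less.prems unfolding is_deriv_def by blast
  show ?case
  proof (cases "snd (\<pi> ! i)")
    case Crit
    then have "fst (\<pi> ! i) \<in> crit_fmls \<pi>" using less.prems unfolding crit_fmls_def by auto
    then show ?thesis using assms(2) by blast
  next
    case Axm
    then show ?thesis using line holds_C_axiom by simp
  next
    case (MP j k)
    then have "j < i" "k < i" "fst (\<pi> ! k) = Imp (fst (\<pi> ! j)) (fst (\<pi> ! i))" using line by auto
    then show ?thesis using less by (metis holds.simps(5) order.strict_trans)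
  qed
qed

lemma holds_end_fml:
  assumes "is_deriv \<pi>" "\<forall>F\<in>crit_fmls \<pi>. holds I F"
  shows "holds I (end_fml \<pi>)"
proof -
  have "\<pi> \<noteq> []" using assms(1) unfolding is_deriv_def by blast
  then show ?thesis unfolding end_fml_def using holds_deriv_line[OF assms] by (simp add: last_conv_nth)
qed

lemma lc_crit_fmls: "is_deriv \<pi> \<Longrightarrow> F \<in> crit_fmls \<pi> \<Longrightarrow> lc_f 0 F"
  unfolding crit_fmls_def is_deriv_def by auto

lemma lc_end_fml: "is_deriv \<pi> \<Longrightarrow> lc_f 0 (end_fml \<pi>)"
  unfolding end_fml_def is_deriv_def by (auto simp: last_conv_nth)

lemma finite_crit_fmls: "finite (crit_fmls \<pi>)"
  unfolding crit_fmls_def by auto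

definition crit_fml :: "trm \<Rightarrow> trm \<Rightarrow> frm" where
  "crit_fml e t = (case e of
      trm.Eps A \<Rightarrow> Imp (open_f 0 t A) (open_f 0 e A)
    | Tau A \<Rightarrow> Imp (open_f 0 e A) (open_f 0 t A)
    | _ \<Rightarrow> Bot)"

lemma belongs_iff_crit_fml:
  "belongs F e \<longleftrightarrow>
     (\<exists>A. (e = trm.Eps A \<or> e = Tau A) \<and> lc_f 1 A) \<and> (\<exists>t. lc_t 0 t \<and> F = crit_fml e t)"
  unfolding belongs_def crit_fml_def by auto

text \<open>Replacing e by t turns A(e) into A(t), so once the critical formula with witness t is false,
  every critical formula of e becomes true after replacing e by t.\<close>
lemma holds_crit_fml_or_repl:
  assumes "e = trm.Eps A \<or> e = Tau A"
  shows "holds I (crit_fml e t) \<or> holds I (repl_f e t (crit_fml e t'))"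
  using assms repl_open_binder[OF assms] by (auto simp: crit_fml_def)

lemma ex_Lam_refuted:
  assumes "is_deriv \<pi>" "\<forall>G\<in>Gam \<pi> e. holds I (repl_f e s G)" "\<not> holds I (repl_f e s (end_fml \<pi>))"
  shows "\<exists>F\<in>Lam \<pi> e. \<not> holds I (repl_f e s F)"
proof (rule ccontr)
  assume "\<not> ?thesis"
  with assms(2) have "\<forall>F\<in>crit_fmls \<pi>. holds (\<lambda>a. I (repl_f e s a)) F"
    by (auto simp: Gam_def holds_repl_f)
  then have "holds (\<lambda>a. I (repl_f e s a)) (end_fml \<pi>)" by (rule holds_end_fml[OF assms(1)])
  with assms(3) show False by (simp add: holds_repl_f)
qed

lemma entails_elim_disjunction:
  assumes d: "is_deriv \<pi>" and e: "e = trm.Eps A \<or> e = Tau A"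
    and wit: "\<forall>F\<in>Lam \<pi> e. \<exists>t\<in>set ts. F = crit_fml e t"
  shows "entails (\<Union>s\<in>set (e # ts). repl_f e s ` Gam \<pi> e)
                 (disj_list (map (\<lambda>s. repl_f e s (end_fml \<pi>)) (e # ts)))"
  unfolding entails_def
proof (intro allI impI)
  fix I assume Gam: "\<forall>G\<in>(\<Union>s\<in>set (e # ts). repl_f e s ` Gam \<pi> e). holds I G"
  show "holds I (disj_list (map (\<lambda>s. repl_f e s (end_fml \<pi>)) (e # ts)))"
  proof (rule ccontr)
    assume "\<not> ?thesis"
    then have none: "\<not> holds I (repl_f e s (end_fml \<pi>))" if "s \<in> set (e # ts)" for s
      using that by (auto simp: holds_disj_list)
    have refuted: "\<exists>F\<in>Lam \<pi> e. \<not> holds I (repl_f e s F)" if s: "s \<in> set (e # ts)" for s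
    proof (rule ex_Lam_refuted[OF d])
      show "\<forall>G\<in>Gam \<pi> e. holds I (repl_f e s G)" using Gam s by auto
      show "\<not> holds I (repl_f e s (end_fml \<pi>))" using none s .
    qed
    obtain F where "F \<in> Lam \<pi> e" "\<not> holds I F" using refuted[of e] by (auto simp: repl_id)
    with wit obtain t where t: "t \<in> set ts" "\<not> holds I (crit_fml e t)" by metis
    obtain F' where "F' \<in> Lam \<pi> e" "\<not> holds I (repl_f e t F')" using refuted[of t] t by auto
    with wit obtain t' where "\<not> holds I (repl_f e t (crit_fml e t'))" by metis
    with t(2) show False using holds_crit_fml_or_repl[OF e, of I t t'] by simp
  qed
qed

lemma complete_elim_set_witnesses:
  assumes d: "is_deriv \<pi>" and e: "e = trm.Eps A \<or> e = Tau A" and "lc_f 1 A"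
    and lc_ts: "\<forall>t\<in>set ts. lc_t 0 t" and wit: "\<forall>F\<in>Lam \<pi> e. \<exists>t\<in>set ts. F = crit_fml e t"
  shows "complete_elim_set \<pi> e (e # ts)"
proof -
  have lc_ss: "\<forall>s\<in>set (e # ts). lc_t 0 s" using e \<open>lc_f 1 A\<close> lc_ts by auto
  let ?\<Gamma> = "\<Union>s\<in>set (e # ts). repl_f e s ` Gam \<pi> e"
  let ?D = "disj_list (map (\<lambda>s. repl_f e s (end_fml \<pi>)) (e # ts))"
  have "derives ?\<Gamma> ?D"
  proof (rule derives_if_entails)
    show "finite ?\<Gamma>" using finite_crit_fmls[of \<pi>] unfolding Gam_def by auto
    show "\<forall>G\<in>?\<Gamma>. lc_f 0 G"
      using lc_ss lc_crit_fmls[OF d] lc_repl(2) unfolding Gam_def by blast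
    show "lc_f 0 ?D"
      using lc_ss lc_end_fml[OF d] lc_repl(2) by (intro lc_disj_list) auto
    show "entails ?\<Gamma> ?D" using entails_elim_disjunction[OF d e wit] .
  qed
  with lc_ss show ?thesis unfolding complete_elim_set_def by blast
qed

lemma Lam_witnesses:
  obtains ts where "\<forall>t\<in>set ts. lc_t 0 t" "\<forall>F\<in>Lam \<pi> e. \<exists>t\<in>set ts. F = crit_fml e t"
proof -
  have "finite (Lam \<pi> e)" using finite_crit_fmls[of \<pi>] unfolding Lam_def by auto
  moreover have "\<forall>F\<in>Lam \<pi> e. \<exists>t. lc_t 0 t \<and> F = crit_fml e t"
    unfolding Lam_def by (auto simp: belongs_iff_crit_fml)
  ultimately obtain w where w: "\<forall>F\<in>Lam \<pi> e. lc_t 0 (w F) \<and> F = crit_fml e (w F)"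
    by (metis finite_set_choice)
  obtain ts where "set ts = w ` Lam \<pi> e"
    using \<open>finite (Lam \<pi> e)\<close> by (meson finite_imageI finite_list)
  with w show thesis by (intro that) auto
qed

theorem mainTheorem12:
  assumes "is_deriv \<pi>" and "crit_term \<pi> e"
  shows "\<exists>ss. complete_elim_set \<pi> e ss"
proof -
  obtain F where "belongs F e" using assms(2) unfolding crit_term_def by blast
  then obtain A where "e = trm.Eps A \<or> e = Tau A" "lc_f 1 A"
    unfolding belongs_iff_crit_fml by blast
  moreover obtain ts where "\<forall>t\<in>set ts. lc_t 0 t" "\<forall>F\<in>Lam \<pi> e. \<exists>t\<in>set ts. F = crit_fml e t"
    by (rule Lam_witnesses)
  ultimately have "complete_elim_set \<pi> e (e # ts)"
    using complete_elim_set_witnesses[OF assms(1)] by blast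
  then show ?thesis by blast
qed

end
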